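(* Consider $\mathrm{CC}(N_{11},N_{10},N_{01},N_{00})=\frac{N_{11}N_{00}-N_{10}N_{01}}{\sqrt{(N_{11}+N_{10})(N_{11}+N_{01})(N_{00}+N_{10})(N_{00}+N_{01})}}$ on nonnegative real arguments for which all four factors under the square root are positive. If $N_{10}+N_{01}>0$, then $\mathrm{CC}$ is strictly increasing in $N_{11}$ (other arguments fixed) and strictly increasing in $N_{00}$ (other arguments fixed). If $N_{11}+N_{00}>0$, then $\mathrm{CC}$ is strictly decreasing in $N_{10}$ and strictly decreasing in $N_{01}$. The same monotonicity holds for $\mathrm{CD}=\frac1\pi\arccos\mathrm{CC}$ with all directions reversed.
   Context: $N_{11},N_{10},N_{01},N_{00}$ play the role of pair-counts of two clusterings: numbers of element pairs that are together in both clusterings, in the first only, in the second only, and in neither. *)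

theory Defs
  imports Complex_Main
begin

definition CC :: "real \<Rightarrow> real \<Rightarrow> real \<Rightarrow> real \<Rightarrow> real" where
  "CC n11 n10 n01 n00 = (n11 * n00 - n10 * n01) /
     sqrt ((n11 + n10) * (n11 + n01) * (n00 + n10) * (n00 + n01))"

definition CD :: "real \<Rightarrow> real \<Rightarrow> real \<Rightarrow> real \<Rightarrow> real" where
  "CD n11 n10 n01 n00 = arccos (CC n11 n10 n01 n00) / pi"

definition admissible :: "real \<Rightarrow> real \<Rightarrow> real \<Rightarrow> real \<Rightarrow> bool" where
  "admissible n11 n10 n01 n00 \<longleftrightarrow>
     n11 \<ge> 0 \<and> n10 \<ge> 0 \<and> n01 \<ge> 0 \<and> n00 \<ge> 0 \<and>
     n11 + n10 > 0 \<and> n11 + n01 > 0 \<and> n00 + n10 > 0 \<and> n00 + n01 > 0"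

end

theory Submission
  imports Defs
begin

text \<open>With the other three counts fixed, CC as a function of \<open>N\<^sub>1\<^sub>1 = x\<close> is a
  positive constant times \<open>(x d - p q) / sqrt ((x + p) (x + q))\<close>. Twice the numerator of
  its derivative is \<open>d x (p + q) + 2 d p q + 2 x p q + p q (p + q)\<close>, a sum of nonnegative
  terms that is positive once \<open>p + q > 0\<close>. Swapping \<open>N\<^sub>1\<^sub>1\<close> with \<open>N\<^sub>0\<^sub>0\<close> leaves CC
  unchanged and complementing either clustering negates it, which gives the other three
  cases. Since \<open>\<bar>CC\<bar> \<le> 1\<close> and arccos is strictly decreasing on \<open>[-1, 1]\<close>, CD moves
  the opposite way.\<close>

lemma corr_profile_has_derivative:
  fixes p q d x :: real
  assumes "x + p > 0" "x + q > 0"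
  shows "((\<lambda>x. (x * d - p * q) / sqrt ((x + p) * (x + q))) has_real_derivative
     (d * x * (p + q) + 2 * d * p * q + 2 * x * p * q + p * q * (p + q)) /
       (2 * ((x + p) * (x + q)) * sqrt ((x + p) * (x + q)))) (at x)"
proof -
  let ?r = "sqrt ((x + p) * (x + q))"
  have pos: "(x + p) * (x + q) > 0" using assms by simp
  then have "?r > 0" by simp
  have "((\<lambda>x. (x * d - p * q) / sqrt ((x + p) * (x + q))) has_real_derivative
     (d * ?r - (x * d - p * q) * (inverse ?r / 2 * ((x + q) + (x + p)))) / ?r\<^sup>2) (at x)"
    using pos \<open>?r > 0\<close> by (auto intro!: derivative_eq_intros simp: field_simps)
  moreover have "(d * ?r - (x * d - p * q) * (inverse ?r / 2 * ((x + q) + (x + p)))) / ?r\<^sup>2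
     = (d * x * (p + q) + 2 * d * p * q + 2 * x * p * q + p * q * (p + q)) /
       (2 * ((x + p) * (x + q)) * ?r)"
    using pos \<open>?r > 0\<close> by (simp add: field_simps)
  ultimately show ?thesis by simp
qed

lemma corr_profile_derivative_numerator_pos:
  fixes p q d x :: real
  assumes "p \<ge> 0" "q \<ge> 0" "d \<ge> 0" "x > 0" "p + q > 0" "d > 0 \<or> p > 0 \<and> q > 0"
  shows "d * x * (p + q) + 2 * d * p * q + 2 * x * p * q + p * q * (p + q) > 0"
proof -
  have "d * x * (p + q) \<ge> 0" "2 * d * p * q \<ge> 0" "2 * x * p * q \<ge> 0" "p * q * (p + q) \<ge> 0"
    using assms by auto
  moreover have "d * x * (p + q) > 0 \<or> 2 * x * p * q > 0"
    using assms by auto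
  ultimately show ?thesis by linarith
qed

lemma corr_profile_strict_mono:
  fixes p q d a b :: real
  assumes "p \<ge> 0" "q \<ge> 0" "d \<ge> 0" "p + q > 0" "d + p > 0" "d + q > 0"
    and "a \<ge> 0" "a + p > 0" "a + q > 0" "a < b"
  shows "(a * d - p * q) / sqrt ((a + p) * (a + q))
    < (b * d - p * q) / sqrt ((b + p) * (b + q))"
proof (rule DERIV_pos_imp_increasing_open[OF \<open>a < b\<close>])
  fix x assume "a < x" "x < b"
  then have x: "x > 0" "x + p > 0" "x + q > 0" using assms by auto
  have "d > 0 \<or> p > 0 \<and> q > 0" using assms by auto
  with x assms have "d * x * (p + q) + 2 * d * p * q + 2 * x * p * q + p * q * (p + q) > 0"
    by (intro corr_profile_derivative_numerator_pos) auto
  moreover have "2 * ((x + p) * (x + q)) * sqrt ((x + p) * (x + q)) > 0" using x by simp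
  ultimately show "\<exists>y. ((\<lambda>x. (x * d - p * q) / sqrt ((x + p) * (x + q)))
      has_real_derivative y) (at x) \<and> y > 0"
    using corr_profile_has_derivative[OF x(2,3)] divide_pos_pos by blast
next
  have "\<forall>x\<in>{a..b}. sqrt ((x + p) * (x + q)) \<noteq> 0" using assms by auto
  then show "continuous_on {a..b} (\<lambda>x. (x * d - p * q) / sqrt ((x + p) * (x + q)))"
    by (intro continuous_intros) auto
qed

lemma CC_strict_mono_n11:
  assumes "n10 + n01 > 0" "admissible a n10 n01 n00" "admissible b n10 n01 n00" "a < b"
  shows "CC a n10 n01 n00 < CC b n10 n01 n00"
proof -
  have "\<And>x. CC x n10 n01 n00 =
      ((x * n00 - n10 * n01) / sqrt ((x + n10) * (x + n01))) / sqrt ((n00 + n10) * (n00 + n01))"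
    unfolding CC_def by (simp add: real_sqrt_mult mult.assoc flip: divide_divide_eq_left)
  moreover have "sqrt ((n00 + n10) * (n00 + n01)) > 0"
    using assms(2) by (simp add: admissible_def)
  moreover have "(a * n00 - n10 * n01) / sqrt ((a + n10) * (a + n01))
      < (b * n00 - n10 * n01) / sqrt ((b + n10) * (b + n01))"
    using assms by (intro corr_profile_strict_mono) (auto simp: admissible_def)
  ultimately show ?thesis by (metis divide_strict_right_mono)
qed

lemma CC_swap_n11_n00: "CC n11 n10 n01 n00 = CC n00 n10 n01 n11"
  unfolding CC_def by (simp add: ac_simps)

lemma admissible_swap_n11_n00: "admissible n11 n10 n01 n00 = admissible n00 n10 n01 n11"
  unfolding admissible_def by auto

lemma CC_complement_second: "CC n11 n10 n01 n00 = - CC n10 n11 n00 n01"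
  unfolding CC_def by (simp add: ac_simps minus_divide_left)

lemma admissible_complement_second: "admissible n11 n10 n01 n00 = admissible n10 n11 n00 n01"
  unfolding admissible_def by auto

lemma CC_complement_first: "CC n11 n10 n01 n00 = - CC n01 n00 n11 n10"
  unfolding CC_def by (simp add: ac_simps minus_divide_left)

lemma admissible_complement_first: "admissible n11 n10 n01 n00 = admissible n01 n00 n11 n10"
  unfolding admissible_def by auto

lemma CC_strict_mono_n00:
  assumes "n10 + n01 > 0" "admissible n11 n10 n01 a" "admissible n11 n10 n01 b" "a < b"
  shows "CC n11 n10 n01 a < CC n11 n10 n01 b"
  using CC_strict_mono_n11[of n10 n01 a n11 b] assms
  by (simp add: CC_swap_n11_n00[of _ n10 n01 n11] admissible_swap_n11_n00[of _ n10 n01 n11])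

lemma CC_strict_antimono_n10:
  assumes "n11 + n00 > 0" "admissible n11 a n01 n00" "admissible n11 b n01 n00" "a < b"
  shows "CC n11 a n01 n00 > CC n11 b n01 n00"
  using CC_strict_mono_n11[of n11 n00 a n01 b] assms
  by (simp add: CC_complement_second[of n11 _ n01 n00]
      admissible_complement_second[of n11 _ n01 n00])

lemma CC_strict_antimono_n01:
  assumes "n11 + n00 > 0" "admissible n11 n10 a n00" "admissible n11 n10 b n00" "a < b"
  shows "CC n11 n10 a n00 > CC n11 n10 b n00"
  using CC_strict_mono_n11[of n00 n11 a n10 b] assms
  by (simp add: CC_complement_first[of n11 n10 _ n00]
      admissible_complement_first[of n11 n10 _ n00] add.commute)

lemma abs_CC_le_1:
  assumes "admissible n11 n10 n01 n00"
  shows "\<bar>CC n11 n10 n01 n00\<bar> \<le> 1"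
proof -
  define x where "x = n11 * n00"
  define y where "y = n10 * n01"
  have ad: "n11 \<ge> 0" "n10 \<ge> 0" "n01 \<ge> 0" "n00 \<ge> 0"
    "n11 + n10 > 0" "n11 + n01 > 0" "n00 + n10 > 0" "n00 + n01 > 0"
    using assms unfolding admissible_def by auto
  then have "x \<ge> 0" "y \<ge> 0" by (simp_all add: x_def y_def)
  have "(n11 + n10) * (n00 + n01) \<ge> x + y" "(n11 + n01) * (n00 + n10) \<ge> x + y"
    unfolding x_def y_def using ad by (simp_all add: algebra_simps)
  with \<open>x \<ge> 0\<close> \<open>y \<ge> 0\<close>
  have "(x + y) * (x + y) \<le> ((n11 + n10) * (n00 + n01)) * ((n11 + n01) * (n00 + n10))"
    by (intro mult_mono) auto
  moreover have "(x - y)\<^sup>2 \<le> (x + y) * (x + y)"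
    using \<open>x \<ge> 0\<close> \<open>y \<ge> 0\<close> by (simp add: power2_eq_square algebra_simps)
  ultimately have "(x - y)\<^sup>2 \<le> (n11 + n10) * (n11 + n01) * (n00 + n10) * (n00 + n01)"
    by (simp add: algebra_simps)
  then have "\<bar>x - y\<bar> \<le> sqrt ((n11 + n10) * (n11 + n01) * (n00 + n10) * (n00 + n01))"
    using real_sqrt_le_mono by fastforce
  moreover have "(n11 + n10) * (n11 + n01) * (n00 + n10) * (n00 + n01) > 0" using ad by simp
  ultimately show ?thesis unfolding CC_def x_def y_def
    by (simp add: abs_div divide_le_eq_1)
qed

lemma CD_less_CD:
  assumes "admissible a11 a10 a01 a00" "admissible b11 b10 b01 b00"
    and "CC a11 a10 a01 a00 < CC b11 b10 b01 b00"
  shows "CD b11 b10 b01 b00 < CD a11 a10 a01 a00"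
proof -
  have "arccos (CC b11 b10 b01 b00) < arccos (CC a11 a10 a01 a00)"
    using abs_CC_le_1[OF assms(1)] abs_CC_le_1[OF assms(2)] assms(3)
    by (intro arccos_less_arccos) auto
  then show ?thesis unfolding CD_def by (simp add: divide_strict_right_mono)
qed

theorem mainTheorem9:
  shows
  "(\<forall>n10 n01 n00 a b. n10 + n01 > 0 \<and> admissible a n10 n01 n00 \<and> admissible b n10 n01 n00 \<and> a < b
      \<longrightarrow> CC a n10 n01 n00 < CC b n10 n01 n00 \<and> CD a n10 n01 n00 > CD b n10 n01 n00) \<and>
   (\<forall>n11 n10 n01 a b. n10 + n01 > 0 \<and> admissible n11 n10 n01 a \<and> admissible n11 n10 n01 b \<and> a < b
      \<longrightarrow> CC n11 n10 n01 a < CC n11 n10 n01 b \<and> CD n11 n10 n01 a > CD n11 n10 n01 b) \<and>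
   (\<forall>n11 n01 n00 a b. n11 + n00 > 0 \<and> admissible n11 a n01 n00 \<and> admissible n11 b n01 n00 \<and> a < b
      \<longrightarrow> CC n11 a n01 n00 > CC n11 b n01 n00 \<and> CD n11 a n01 n00 < CD n11 b n01 n00) \<and>
   (\<forall>n11 n10 n00 a b. n11 + n00 > 0 \<and> admissible n11 n10 a n00 \<and> admissible n11 n10 b n00 \<and> a < b
      \<longrightarrow> CC n11 n10 a n00 > CC n11 n10 b n00 \<and> CD n11 n10 a n00 < CD n11 n10 b n00)"
  by (meson CC_strict_mono_n11 CC_strict_mono_n00 CC_strict_antimono_n10 CC_strict_antimono_n01
      CD_less_CD)

end
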